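(* If $\mathfrak{g}$ is either atom or loose guards, then for $k>0$ and $\sigma$-structures $\mathcal{A},\mathcal{B}$, there is a bijective correspondence between (1) coKleisli morphisms ($\sigma$-homomorphisms) $\mathbb{G}_{k}^{\mathfrak{g}} \mathcal{A} \to \mathcal{B}$, and (2) winning strategies for Duplicator in the $\mathfrak{g}$-guarded $k$-bounded simulation game from $\mathcal{A}$ to $\mathcal{B}$. Thus $\mathcal{A} \preceq^{\mathfrak{g}}_{k} \mathcal{B}$ iff there is a homomorphism $\mathbb{G}_{k}^{\mathfrak{g}} \mathcal{A} \to \mathcal{B}$.
   Context: A set is $k$-guarded (atom/loose) if contained in the support of a tuple of length at most $k$ satisfying an atom/loose guard. $\mathbb{G}_k^{\mathfrak{g}}\mathcal{A}$ is the $\sigma$-structure whose universe consists of equivalence classes $[p,a]$ of focussed plays $\langle p,a\rangle$, where $p=[U_1,\ldots,U_n]$ is a non-empty list of $k$-guarded $\mathfrak{g}$-guarded sets of $\mathcal{A}$ and $a\in U_n$; $\langle p,a\rangle\sim\langle q,a'\rangle$ iff $a=a'$, the greatest common prefix $p\sqcap q$ is non-empty, and $a$ lies in the last element of every play on the prefix-order paths from $p\sqcap q$ to $p$ and to $q$; $R^{\mathbb{G}_k\mathcal{A}} = \{([p,a_1],\ldots,[p,a_r]) \mid R^{\mathcal{A}}(a_1,\ldots,a_r)\}$. The $k$-bounded $\mathfrak{g}$-guarded simulation game from $\mathcal{A}$ to $\mathcal{B}$: starting with $X_0=\varnothing,\varphi_0=\varnothing$, in each round Spoiler picks a $k$-guarded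 set $X_{n+1}$ in $\mathcal{A}$ and Duplicator responds with a $k$-guarded set $Y_{n+1}$ in $\mathcal{B}$ and a partial homomorphism $\varphi_{n+1}:X_{n+1}\to Y_{n+1}$ agreeing with $\varphi_n$ on $X_{n+1}\cap X_n$; Duplicator wins if he can always respond. $\mathcal{A}\preceq^{\mathfrak{g}}_k\mathcal{B}$ means Duplicator has a winning strategy. *)

theory Defs
  imports Main "HOL-Library.Sublist" "HOL-Library.FuncSet"
begin

record ('r, 'a) struc =
  univ :: "'a set"
  rels :: "'r \<Rightarrow> 'a list set"

definition wf_struc :: "('r \<Rightarrow> nat) \<Rightarrow> ('r, 'a) struc \<Rightarrow> bool" where
  "wf_struc ar A \<longleftrightarrow> (\<forall>R t. t \<in> rels A R \<longrightarrow> length t = ar R \<and> set t \<subseteq> univ A)"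

datatype guard = AtomG | LooseG

text \<open>A tuple satisfies an atom guard: an atom R(...) whose variables are exactly
  those of the tuple holds of it, or an equality atom x = x (singleton support).
  A tuple satisfies a loose guard: a conjunction of atoms over the variables of the
  tuple in which every pair of variables co-occurs in some atom.\<close>

definition satisfies_guard :: "guard \<Rightarrow> ('r, 'a) struc \<Rightarrow> 'a list \<Rightarrow> bool" where
  "satisfies_guard g A as \<longleftrightarrow> as \<noteq> [] \<and> set as \<subseteq> univ A \<and>
     (case g of
        AtomG \<Rightarrow> (\<exists>x. set as = {x}) \<or> (\<exists>R t. t \<in> rels A R \<and> set t = set as)
      | LooseG \<Rightarrow> (\<forall>a\<in>set as. \<forall>b\<in>set as. a = b \<or>
                   (\<exists>R t. t \<in> rels A R \<and> set t \<subseteq> set as \<and> a \<in> set t \<and> b \<in> set t)))"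

definition kguarded :: "nat \<Rightarrow> guard \<Rightarrow> ('r, 'a) struc \<Rightarrow> 'a set \<Rightarrow> bool" where
  "kguarded k g A X \<longleftrightarrow> (\<exists>as. length as \<le> k \<and> satisfies_guard g A as \<and> X \<subseteq> set as)"

definition plays :: "nat \<Rightarrow> guard \<Rightarrow> ('r, 'a) struc \<Rightarrow> 'a set list set" where
  "plays k g A = {p. p \<noteq> [] \<and> (\<forall>X\<in>set p. kguarded k g A X)}"

definition fplays :: "nat \<Rightarrow> guard \<Rightarrow> ('r, 'a) struc \<Rightarrow> ('a set list \<times> 'a) set" where
  "fplays k g A = {(p, a). p \<in> plays k g A \<and> a \<in> last p}"

definition play_equiv :: "nat \<Rightarrow> guard \<Rightarrow> ('r, 'a) struc \<Rightarrow> (('a set list \<times> 'a) \<times> ('a set list \<times> 'a)) set" where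
  "play_equiv k g A = {((p, a), (q, a')). (p, a) \<in> fplays k g A \<and> (q, a') \<in> fplays k g A \<and>
      a = a' \<and> longest_common_prefix p q \<noteq> [] \<and>
      (\<forall>r. prefix (longest_common_prefix p q) r \<and> prefix r p \<longrightarrow> a \<in> last r) \<and>
      (\<forall>r. prefix (longest_common_prefix p q) r \<and> prefix r q \<longrightarrow> a \<in> last r)}"

definition pcls :: "nat \<Rightarrow> guard \<Rightarrow> ('r, 'a) struc \<Rightarrow> 'a set list \<Rightarrow> 'a \<Rightarrow> ('a set list \<times> 'a) set" where
  "pcls k g A p a = play_equiv k g A `` {(p, a)}"

definition Gk :: "nat \<Rightarrow> guard \<Rightarrow> ('r, 'a) struc \<Rightarrow> ('r, ('a set list \<times> 'a) set) struc" where
  "Gk k g A = \<lparr> univ = fplays k g A // play_equiv k g A,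
     rels = (\<lambda>R. {map (pcls k g A p) t | p t. p \<in> plays k g A \<and> t \<in> rels A R \<and> set t \<subseteq> last p}) \<rparr>"

definition is_hom :: "('r, 'a) struc \<Rightarrow> ('r, 'b) struc \<Rightarrow> ('a \<Rightarrow> 'b) \<Rightarrow> bool" where
  "is_hom A B h \<longleftrightarrow> h \<in> univ A \<rightarrow> univ B \<and> (\<forall>R t. t \<in> rels A R \<longrightarrow> map h t \<in> rels B R)"

text \<open>Homomorphisms as extensional functions (so that they form a set in bijection).\<close>

definition homs :: "('r, 'a) struc \<Rightarrow> ('r, 'b) struc \<Rightarrow> ('a \<Rightarrow> 'b) set" where
  "homs A B = {h \<in> univ A \<rightarrow>\<^sub>E univ B. is_hom A B h}"

definition partial_hom :: "('r, 'a) struc \<Rightarrow> ('r, 'b) struc \<Rightarrow> 'a set \<Rightarrow> ('a \<Rightarrow> 'b) \<Rightarrow> bool" where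
  "partial_hom A B X f \<longleftrightarrow> f \<in> X \<rightarrow> univ B \<and>
     (\<forall>R t. t \<in> rels A R \<and> set t \<subseteq> X \<longrightarrow> map f t \<in> rels B R)"

text \<open>Duplicator strategies in the k-bounded g-guarded simulation game from A to B:
  to each sequence of Spoiler moves p = [X_1,...,X_n] the strategy assigns the
  partial homomorphism phi_n : X_n \<rightarrow> Y_n (as an extensional function on X_n),
  where Y_n is some k-guarded set of B.\<close>

definition win_strategies ::
  "nat \<Rightarrow> guard \<Rightarrow> ('r, 'a) struc \<Rightarrow> ('r, 'b) struc \<Rightarrow> ('a set list \<Rightarrow> 'a \<Rightarrow> 'b) set" where
  "win_strategies k g A B =
    {S \<in> (\<Pi>\<^sub>E p \<in> plays k g A. last p \<rightarrow>\<^sub>E univ B).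
       (\<forall>p \<in> plays k g A.
          partial_hom A B (last p) (S p) \<and>
          (\<exists>Y. kguarded k g B Y \<and> S p ` last p \<subseteq> Y)) \<and>
       (\<forall>p X. p \<in> plays k g A \<and> kguarded k g A X \<longrightarrow>
          (\<forall>a \<in> X \<inter> last p. S (p @ [X]) a = S p a))}"

definition guarded_sim :: "nat \<Rightarrow> guard \<Rightarrow> ('r, 'a) struc \<Rightarrow> ('r, 'b) struc \<Rightarrow> bool" where
  "guarded_sim k g A B \<longleftrightarrow> win_strategies k g A B \<noteq> {}"

definition hom_to_strategy ::
  "nat \<Rightarrow> guard \<Rightarrow> ('r, 'a) struc \<Rightarrow> (('a set list \<times> 'a) set \<Rightarrow> 'b) \<Rightarrow> ('a set list \<Rightarrow> 'a \<Rightarrow> 'b)" where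
  "hom_to_strategy k g A h = (\<lambda>p \<in> plays k g A. \<lambda>a \<in> last p. h (pcls k g A p a))"

end

theory Submission
  imports Defs
begin

(* A winning Duplicator strategy S answers a play p with a partial homomorphism
   S p on last p, and S (p @ [X]) agrees with S p on X \<inter> last p.  Along the
   prefix path between two equivalent focussed plays the focussed element stays
   in every last move, so S p a is constant on each class [p, a]; and the
   partial-homomorphism condition for all plays is precisely the homomorphism
   condition for the relations of G_k A.  Hence S p a = h [p, a] matches winning
   strategies with homomorphisms G_k A \<rightarrow> B.  The guardedness of Duplicator's
   answers comes for free: extending p by the whole guard of last p turns the
   answer on that guard into a partial homomorphism, and partial homomorphisms
   preserve atom and loose guards. *)

definition in_last_along :: "'a \<Rightarrow> 'a set list \<Rightarrow> 'a set list \<Rightarrow> bool" where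
  "in_last_along a m p \<longleftrightarrow> (\<forall>r. prefix m r \<and> prefix r p \<longrightarrow> a \<in> last r)"

lemma in_last_along_refl: "a \<in> last p \<Longrightarrow> in_last_along a p p"
  unfolding in_last_along_def by (metis prefix_order.antisym)

lemma in_last_along_snocD:
  assumes "in_last_along a m (p @ [X])" and "prefix m p"
  shows "in_last_along a m p" and "a \<in> last p" and "a \<in> X"
proof -
  show "in_last_along a m p"
    using assms unfolding in_last_along_def by (metis prefix_snoc)
  then show "a \<in> last p"
    using assms(2) unfolding in_last_along_def by blast
  show "a \<in> X"
    using assms(1) assms(2) unfolding in_last_along_def
    by (metis last_snoc prefix_order.refl prefix_snoc)
qed

lemma in_last_along_snocI:
  assumes "in_last_along a m p" and "prefix m p" and "a \<in> X"
  shows "in_last_along a m (p @ [X])"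
  using assms unfolding in_last_along_def by (metis last_snoc prefix_snoc)

lemma in_last_along_trans:
  assumes "in_last_along a m q" and "prefix m' q" and "prefix m m'"
    and "in_last_along a m' p" and "prefix m' p"
  shows "in_last_along a m p"
  unfolding in_last_along_def
proof (intro allI impI)
  fix r assume r: "prefix m r \<and> prefix r p"
  then have "prefix r m' \<or> prefix m' r"
    using assms(5) prefix_same_cases by blast
  then show "a \<in> last r"
    using assms r unfolding in_last_along_def by (meson prefix_order.trans)
qed

lemma play_equiv_iff:
  "((p, a), (q, b)) \<in> play_equiv k g A \<longleftrightarrow>
     (p, a) \<in> fplays k g A \<and> (q, b) \<in> fplays k g A \<and> a = b \<and>
     (\<exists>m. m \<noteq> [] \<and> prefix m p \<and> prefix m q \<and> in_last_along a m p \<and> in_last_along a m q)"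
    (is "?lhs \<longleftrightarrow> ?rhs")
proof
  assume ?lhs
  then show ?rhs
    unfolding play_equiv_def in_last_along_def
    using longest_common_prefix_prefix1 longest_common_prefix_prefix2 by blast
next
  assume ?rhs
  then obtain m where m: "m \<noteq> []" "prefix m p" "prefix m q"
    "in_last_along a m p" "in_last_along a m q" by blast
  let ?l = "longest_common_prefix p q"
  have l: "prefix m ?l"
    using m longest_common_prefix_max_prefix by blast
  then have "?l \<noteq> []"
    using m(1) by auto
  moreover have "in_last_along a ?l p" "in_last_along a ?l q"
    using m(4,5) l unfolding in_last_along_def by (meson prefix_order.trans)+
  ultimately show ?lhs
    using \<open>?rhs\<close> unfolding play_equiv_def in_last_along_def by blast
qed

lemma trans_play_equiv: "trans (play_equiv k g A)"
proof (rule transI)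
  fix x y z assume xy: "(x, y) \<in> play_equiv k g A" and yz: "(y, z) \<in> play_equiv k g A"
  obtain p a q b s c where xyz: "x = (p, a)" "y = (q, b)" "z = (s, c)"
    by (cases x, cases y, cases z) blast
  obtain m1 where fp: "(p, a) \<in> fplays k g A" and "a = b"
    and m1: "m1 \<noteq> []" "prefix m1 p" "prefix m1 q" "in_last_along a m1 p" "in_last_along a m1 q"
    using xy unfolding xyz play_equiv_iff by blast
  obtain m2 where fs: "(s, c) \<in> fplays k g A" and "b = c"
    and m2: "m2 \<noteq> []" "prefix m2 q" "prefix m2 s" "in_last_along a m2 q" "in_last_along a m2 s"
    using yz unfolding xyz play_equiv_iff \<open>a = b\<close> by blast
  \<comment> \<open>Both witnesses are prefixes of q, so the shorter one serves for p and s.\<close>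
  have "prefix m1 m2 \<or> prefix m2 m1"
    using m1(3) m2(2) prefix_same_cases by blast
  then have "\<exists>m. m \<noteq> [] \<and> prefix m p \<and> prefix m s \<and> in_last_along a m p \<and> in_last_along a m s"
  proof
    assume "prefix m1 m2"
    then have "in_last_along a m1 s"
      using in_last_along_trans[OF m1(5) m2(2) _ m2(5,3)] by blast
    moreover have "prefix m1 s"
      using \<open>prefix m1 m2\<close> m2(3) by (rule prefix_order.trans)
    ultimately show ?thesis
      using m1 by blast
  next
    assume "prefix m2 m1"
    then have "in_last_along a m2 p"
      using in_last_along_trans[OF m2(4) m1(3) _ m1(4,2)] by blast
    moreover have "prefix m2 p"
      using \<open>prefix m2 m1\<close> m1(2) by (rule prefix_order.trans)
    ultimately show ?thesis
      using m2 by blast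
  qed
  then show "(x, z) \<in> play_equiv k g A"
    unfolding xyz play_equiv_iff using fp fs \<open>a = b\<close> \<open>b = c\<close> by blast
qed

lemma equiv_play_equiv: "equiv (fplays k g A) (play_equiv k g A)"
proof (rule equivI)
  show "play_equiv k g A \<subseteq> fplays k g A \<times> fplays k g A"
    unfolding play_equiv_def by auto
  show "refl_on (fplays k g A) (play_equiv k g A)"
  proof (rule refl_onI)
    fix x assume x: "x \<in> fplays k g A"
    then obtain p a where "x = (p, a)" "p \<noteq> []" "a \<in> last p"
      by (auto simp: fplays_def plays_def)
    then show "(x, x) \<in> play_equiv k g A"
      using x in_last_along_refl[of a p] by (auto simp: play_equiv_iff)
  qed
  show "sym (play_equiv k g A)"
  proof (rule symI)
    fix x y assume "(x, y) \<in> play_equiv k g A"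
    then show "(y, x) \<in> play_equiv k g A"
      by (cases x, cases y) (simp only: play_equiv_iff, blast)
  qed
  show "trans (play_equiv k g A)"
    by (rule trans_play_equiv)
qed

lemma pcls_in_univ_Gk: "(p, a) \<in> fplays k g A \<Longrightarrow> pcls k g A p a \<in> univ (Gk k g A)"
  unfolding pcls_def Gk_def by (simp add: quotientI)

lemma pcls_eq_iff:
  assumes "(p, a) \<in> fplays k g A" "(q, b) \<in> fplays k g A"
  shows "pcls k g A p a = pcls k g A q b \<longleftrightarrow> ((p, a), (q, b)) \<in> play_equiv k g A"
  unfolding pcls_def using equiv_class_eq_iff[OF equiv_play_equiv] assms by blast

lemma univ_Gk_cases:
  assumes "C \<in> univ (Gk k g A)"
  obtains p a where "(p, a) \<in> fplays k g A" "C = pcls k g A p a"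
  using assms unfolding Gk_def pcls_def by (auto elim!: quotientE)

lemma rels_Gk_iff:
  "t' \<in> rels (Gk k g A) R \<longleftrightarrow>
     (\<exists>p t. t' = map (pcls k g A p) t \<and> p \<in> plays k g A \<and> t \<in> rels A R \<and> set t \<subseteq> last p)"
  unfolding Gk_def by auto

lemma rels_Gk_subset_univ:
  assumes "t' \<in> rels (Gk k g A) R"
  shows "set t' \<subseteq> univ (Gk k g A)"
proof -
  obtain p t where "t' = map (pcls k g A p) t" "p \<in> plays k g A" "set t \<subseteq> last p"
    using assms unfolding rels_Gk_iff by blast
  then show ?thesis
    by (auto simp: fplays_def intro!: pcls_in_univ_Gk)
qed

lemma snoc_in_plays: "p \<in> plays k g A \<Longrightarrow> kguarded k g A X \<Longrightarrow> p @ [X] \<in> plays k g A"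
  unfolding plays_def by auto

lemma pcls_snoc:
  assumes p: "p \<in> plays k g A" and X: "kguarded k g A X" and a: "a \<in> X" "a \<in> last p"
  shows "pcls k g A (p @ [X]) a = pcls k g A p a"
proof -
  have fp: "(p, a) \<in> fplays k g A" "(p @ [X], a) \<in> fplays k g A"
    using p X a by (simp_all add: fplays_def snoc_in_plays)
  moreover have "p \<noteq> []"
    using p by (simp add: plays_def)
  moreover have along: "in_last_along a p p"
    using a(2) by (rule in_last_along_refl)
  moreover have "in_last_along a p (p @ [X])"
    using in_last_along_snocI[OF along _ a(1)] by simp
  moreover have "prefix p (p @ [X])" "prefix p p"
    by simp_all
  ultimately have "((p @ [X], a), (p, a)) \<in> play_equiv k g A"
    unfolding play_equiv_iff by blast
  then show ?thesis
    using pcls_eq_iff[OF fp(2,1)] by blast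
qed

lemma win_strategies_snoc:
  assumes "S \<in> win_strategies k g A B" "p \<in> plays k g A" "kguarded k g A X" "a \<in> X" "a \<in> last p"
  shows "S (p @ [X]) a = S p a"
  using assms unfolding win_strategies_def by blast

lemma strategy_eq_along:
  assumes agree: "\<And>p X a. p \<in> plays k g A \<Longrightarrow> kguarded k g A X \<Longrightarrow> a \<in> X \<Longrightarrow> a \<in> last p
      \<Longrightarrow> S (p @ [X]) a = S p a"
  shows "m \<noteq> [] \<Longrightarrow> prefix m p \<Longrightarrow> p \<in> plays k g A \<Longrightarrow> in_last_along a m p \<Longrightarrow> S p a = S m a"
proof (induction p rule: rev_induct)
  case Nil
  then show ?case by simp
next
  case (snoc X p)
  show ?case
  proof (cases "m = p @ [X]")
    case True
    then show ?thesis by simp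
  next
    case False
    then have m: "prefix m p"
      using snoc.prems(2) by (simp add: prefix_snoc)
    then have "p \<in> plays k g A" and X: "kguarded k g A X"
      using snoc.prems(1,3) by (auto simp: plays_def)
    moreover note along = in_last_along_snocD[OF snoc.prems(4) m]
    ultimately have "S p a = S m a"
      using snoc.IH snoc.prems(1) m by blast
    moreover have "S (p @ [X]) a = S p a"
      using agree \<open>p \<in> plays k g A\<close> X along(2,3) by blast
    ultimately show ?thesis by simp
  qed
qed

lemma win_strategy_respects_play_equiv:
  assumes S: "S \<in> win_strategies k g A B" and e: "((p, a), (q, b)) \<in> play_equiv k g A"
  shows "S p a = S q b"
proof -
  obtain m where "a = b" "p \<in> plays k g A" "q \<in> plays k g A"
    and m: "m \<noteq> []" "prefix m p" "prefix m q" "in_last_along a m p" "in_last_along a m q"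
    using e unfolding play_equiv_iff fplays_def by blast
  have "S r a = S m a" if "prefix m r" "r \<in> plays k g A" "in_last_along a m r" for r
    using strategy_eq_along[of k g A S] win_strategies_snoc[OF S] m(1) that by blast
  then show ?thesis
    using m \<open>a = b\<close> \<open>p \<in> plays k g A\<close> \<open>q \<in> plays k g A\<close> by metis
qed

lemma partial_hom_restrict: "partial_hom A B X (restrict f X) \<longleftrightarrow> partial_hom A B X f"
proof -
  have "map (restrict f X) t = map f t" if "set t \<subseteq> X" for t
    using that by (auto intro: map_cong)
  then have "(\<forall>R t. t \<in> rels A R \<and> set t \<subseteq> X \<longrightarrow> map (restrict f X) t \<in> rels B R) \<longleftrightarrow>
      (\<forall>R t. t \<in> rels A R \<and> set t \<subseteq> X \<longrightarrow> map f t \<in> rels B R)"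
    by metis
  then show ?thesis
    unfolding partial_hom_def by (simp add: restrict_Pi_cancel)
qed

lemma partial_hom_Gk_pcls:
  assumes h: "is_hom (Gk k g A) B h" and p: "p \<in> plays k g A"
  shows "partial_hom A B (last p) (\<lambda>a. h (pcls k g A p a))"
  unfolding partial_hom_def
proof (intro conjI allI impI)
  show "(\<lambda>a. h (pcls k g A p a)) \<in> last p \<rightarrow> univ B"
  proof
    fix a assume "a \<in> last p"
    then have "pcls k g A p a \<in> univ (Gk k g A)"
      using p by (simp add: fplays_def pcls_in_univ_Gk)
    then show "h (pcls k g A p a) \<in> univ B"
      using h unfolding is_hom_def by blast
  qed
next
  fix R t assume "t \<in> rels A R \<and> set t \<subseteq> last p"
  then have "map (pcls k g A p) t \<in> rels (Gk k g A) R"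
    using p unfolding rels_Gk_iff by (intro exI[of _ p] exI[of _ t]) simp
  then have "map h (map (pcls k g A p) t) \<in> rels B R"
    using h unfolding is_hom_def by blast
  then show "map (\<lambda>a. h (pcls k g A p a)) t \<in> rels B R"
    by (simp add: comp_def)
qed

lemma satisfies_guard_map_AtomG:
  assumes as: "satisfies_guard AtomG A as" and f: "partial_hom A B (set as) f"
  shows "satisfies_guard AtomG B (map f as)"
proof -
  have "(\<exists>x. set as = {x}) \<or> (\<exists>R t. t \<in> rels A R \<and> set t = set as)"
    using as unfolding satisfies_guard_def by simp
  then have "(\<exists>y. set (map f as) = {y}) \<or> (\<exists>R t. t \<in> rels B R \<and> set t = set (map f as))"
  proof (elim disjE exE conjE)
    fix R t assume "t \<in> rels A R" "set t = set as"
    then have "map f t \<in> rels B R \<and> set (map f t) = set (map f as)"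
      using f unfolding partial_hom_def by simp
    then show ?thesis by blast
  qed auto
  then show ?thesis
    using as f unfolding satisfies_guard_def partial_hom_def by auto
qed

lemma satisfies_guard_map_LooseG:
  assumes as: "satisfies_guard LooseG A as" and f: "partial_hom A B (set as) f"
  shows "satisfies_guard LooseG B (map f as)"
proof -
  have "a' = b' \<or> (\<exists>R t. t \<in> rels B R \<and> set t \<subseteq> set (map f as) \<and> a' \<in> set t \<and> b' \<in> set t)"
    if image: "a' \<in> set (map f as)" "b' \<in> set (map f as)" for a' b'
  proof -
    obtain a b where ab: "a \<in> set as" "b \<in> set as" "a' = f a" "b' = f b"
      using image by auto
    then have "a = b \<or> (\<exists>R t. t \<in> rels A R \<and> set t \<subseteq> set as \<and> a \<in> set t \<and> b \<in> set t)"
      using as unfolding satisfies_guard_def by simp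
    then show ?thesis
    proof (elim disjE exE conjE)
      fix R t assume t: "t \<in> rels A R" "set t \<subseteq> set as" "a \<in> set t" "b \<in> set t"
      then have "map f t \<in> rels B R \<and> set (map f t) \<subseteq> set (map f as) \<and> a' \<in> set (map f t) \<and> b' \<in> set (map f t)"
        using f ab unfolding partial_hom_def by auto
      then show ?thesis by blast
    qed (use ab in simp)
  qed
  then show ?thesis
    using as f unfolding satisfies_guard_def partial_hom_def by auto
qed

lemma satisfies_guard_map:
  "satisfies_guard g A as \<Longrightarrow> partial_hom A B (set as) f \<Longrightarrow> satisfies_guard g B (map f as)"
  by (cases g) (simp_all add: satisfies_guard_map_AtomG satisfies_guard_map_LooseG)

lemma kguarded_subset: "kguarded k g A X \<Longrightarrow> Y \<subseteq> X \<Longrightarrow> kguarded k g A Y"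
  unfolding kguarded_def by blast

lemma kguarded_Gk_hom_image:
  assumes h: "is_hom (Gk k g A) B h" and p: "p \<in> plays k g A"
  shows "kguarded k g B ((\<lambda>a. h (pcls k g A p a)) ` last p)"
proof -
  have "kguarded k g A (last p)"
    using p by (simp add: plays_def)
  then obtain as where as: "length as \<le> k" "satisfies_guard g A as" "last p \<subseteq> set as"
    unfolding kguarded_def by blast
  then have guard: "kguarded k g A (set as)"
    unfolding kguarded_def by blast
  define q where "q = p @ [set as]"
  define f where "f = (\<lambda>a. h (pcls k g A q a))"
  have "q \<in> plays k g A"
    unfolding q_def using p guard by (rule snoc_in_plays)
  then have "partial_hom A B (last q) f"
    unfolding f_def by (rule partial_hom_Gk_pcls[OF h])
  then have "partial_hom A B (set as) f"
    by (simp add: q_def)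
  then have "satisfies_guard g B (map f as)"
    using as(2) satisfies_guard_map by blast
  then have "kguarded k g B (set (map f as))"
    unfolding kguarded_def using as(1) by (intro exI[of _ "map f as"]) simp
  moreover have "(\<lambda>a. h (pcls k g A p a)) ` last p \<subseteq> set (map f as)"
  proof (rule image_subsetI)
    fix a assume a: "a \<in> last p"
    then have "a \<in> set as"
      using as(3) by blast
    moreover have "f a = h (pcls k g A p a)"
      using pcls_snoc[OF p guard \<open>a \<in> set as\<close> a] unfolding f_def q_def by simp
    ultimately show "h (pcls k g A p a) \<in> set (map f as)"
      by (metis image_eqI set_map)
  qed
  ultimately show ?thesis
    by (rule kguarded_subset)
qed

lemma hom_to_strategy_apply:
  "p \<in> plays k g A \<Longrightarrow> hom_to_strategy k g A h p = restrict (\<lambda>a. h (pcls k g A p a)) (last p)"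
  unfolding hom_to_strategy_def by simp

lemma hom_to_strategy_in_win_strategies:
  assumes "h \<in> homs (Gk k g A) B"
  shows "hom_to_strategy k g A h \<in> win_strategies k g A B"
proof -
  let ?S = "hom_to_strategy k g A h"
  have h: "is_hom (Gk k g A) B h"
    using assms by (simp add: homs_def)
  have response: "partial_hom A B (last p) (?S p) \<and> kguarded k g B (?S p ` last p)"
    if "p \<in> plays k g A" for p
    using partial_hom_Gk_pcls[OF h that] kguarded_Gk_hom_image[OF h that]
    by (simp add: hom_to_strategy_apply[OF that] partial_hom_restrict)
  then have "?S \<in> (\<Pi>\<^sub>E p \<in> plays k g A. last p \<rightarrow>\<^sub>E univ B)"
    by (auto simp: hom_to_strategy_def partial_hom_def)
  moreover have "?S (p @ [X]) a = ?S p a"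
    if "p \<in> plays k g A" "kguarded k g A X" "a \<in> X" "a \<in> last p" for p X a
    using that snoc_in_plays[OF that(1,2)]
    by (simp add: hom_to_strategy_apply pcls_snoc)
  ultimately show ?thesis
    unfolding win_strategies_def using response by blast
qed

definition strategy_to_hom ::
  "nat \<Rightarrow> guard \<Rightarrow> ('r, 'a) struc \<Rightarrow> ('a set list \<Rightarrow> 'a \<Rightarrow> 'b) \<Rightarrow> (('a set list \<times> 'a) set \<Rightarrow> 'b)" where
  "strategy_to_hom k g A S = (\<lambda>C \<in> univ (Gk k g A). case_prod S (SOME x. x \<in> C))"

lemma strategy_to_hom_pcls:
  assumes S: "S \<in> win_strategies k g A B" and pa: "(p, a) \<in> fplays k g A"
  shows "strategy_to_hom k g A S (pcls k g A p a) = S p a"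
proof -
  define x where "x = (SOME x. x \<in> pcls k g A p a)"
  have "(p, a) \<in> pcls k g A p a"
    unfolding pcls_def using equiv_class_self[OF equiv_play_equiv pa] .
  then have "x \<in> pcls k g A p a"
    unfolding x_def by (rule someI)
  then have "((p, a), (fst x, snd x)) \<in> play_equiv k g A"
    by (simp add: pcls_def)
  then have "S (fst x) (snd x) = S p a"
    using win_strategy_respects_play_equiv[OF S] by metis
  then show ?thesis
    using pcls_in_univ_Gk[OF pa] by (simp add: strategy_to_hom_def case_prod_beta x_def)
qed

lemma strategy_to_hom_in_homs:
  assumes S: "S \<in> win_strategies k g A B"
  shows "strategy_to_hom k g A S \<in> homs (Gk k g A) B"
proof -
  let ?h = "strategy_to_hom k g A S"
  have SPi: "S \<in> (\<Pi>\<^sub>E p \<in> plays k g A. last p \<rightarrow>\<^sub>E univ B)"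
    using S by (simp add: win_strategies_def)
  have "?h C \<in> univ B" if C: "C \<in> univ (Gk k g A)" for C
  proof -
    obtain p a where pa: "(p, a) \<in> fplays k g A" "C = pcls k g A p a"
      using C by (rule univ_Gk_cases)
    then have "S p a \<in> univ B"
      using SPi unfolding fplays_def by blast
    then show ?thesis
      using strategy_to_hom_pcls[OF S pa(1)] pa(2) by simp
  qed
  then have "?h \<in> univ (Gk k g A) \<rightarrow>\<^sub>E univ B"
    by (simp add: strategy_to_hom_def)
  moreover have "map ?h t' \<in> rels B R" if t': "t' \<in> rels (Gk k g A) R" for R t'
  proof -
    obtain p t where pt: "t' = map (pcls k g A p) t" "p \<in> plays k g A" "t \<in> rels A R" "set t \<subseteq> last p"
      using t' unfolding rels_Gk_iff by blast
    have "map ?h t' = map (S p) t"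
      unfolding pt(1) map_map using pt(2,4)
      by (intro map_cong) (auto simp: fplays_def strategy_to_hom_pcls[OF S])
    moreover have "partial_hom A B (last p) (S p)"
      using S pt(2) by (simp add: win_strategies_def)
    ultimately show ?thesis
      using pt(3,4) unfolding partial_hom_def by simp
  qed
  ultimately show ?thesis
    unfolding homs_def is_hom_def by (auto simp: PiE_iff)
qed

lemma hom_to_strategy_strategy_to_hom:
  assumes S: "S \<in> win_strategies k g A B"
  shows "hom_to_strategy k g A (strategy_to_hom k g A S) = S"
proof -
  have SPi: "S \<in> (\<Pi>\<^sub>E p \<in> plays k g A. last p \<rightarrow>\<^sub>E univ B)"
    using S by (simp add: win_strategies_def)
  have "restrict (\<lambda>a. strategy_to_hom k g A S (pcls k g A p a)) (last p) = S p"
    if p: "p \<in> plays k g A" for p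
  proof (rule extensionalityI)
    show "S p \<in> extensional (last p)"
      using SPi p by (simp add: PiE_iff)
    show "restrict (\<lambda>a. strategy_to_hom k g A S (pcls k g A p a)) (last p) a = S p a"
      if "a \<in> last p" for a
      using that p strategy_to_hom_pcls[OF S] by (simp add: fplays_def)
  qed simp
  then show ?thesis
    unfolding hom_to_strategy_def
    by (intro extensionalityI[of _ "plays k g A"]) (use SPi in \<open>simp_all add: PiE_iff\<close>)
qed

lemma strategy_to_hom_hom_to_strategy:
  assumes h: "h \<in> homs (Gk k g A) B"
  shows "strategy_to_hom k g A (hom_to_strategy k g A h) = h"
proof
  fix C
  have hE: "h \<in> univ (Gk k g A) \<rightarrow>\<^sub>E univ B"
    using h by (simp add: homs_def)
  show "strategy_to_hom k g A (hom_to_strategy k g A h) C = h C"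
  proof (cases "C \<in> univ (Gk k g A)")
    case True
    then obtain p a where pa: "(p, a) \<in> fplays k g A" "C = pcls k g A p a"
      by (rule univ_Gk_cases)
    then show ?thesis
      using strategy_to_hom_pcls[OF hom_to_strategy_in_win_strategies[OF h] pa(1)]
      by (auto simp: fplays_def hom_to_strategy_def)
  next
    case False
    then show ?thesis
      using PiE_arb[OF hE False] by (simp add: strategy_to_hom_def)
  qed
qed

lemma bij_betw_hom_to_strategy:
  "bij_betw (hom_to_strategy k g A) (homs (Gk k g A) B) (win_strategies k g A B)"
  by (rule bij_betw_byWitness[where f' = "strategy_to_hom k g A"])
    (auto simp: strategy_to_hom_hom_to_strategy hom_to_strategy_strategy_to_hom
      hom_to_strategy_in_win_strategies strategy_to_hom_in_homs)

lemma restrict_in_homs: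
  assumes "\<And>R t. t \<in> rels C R \<Longrightarrow> set t \<subseteq> univ C" and "is_hom C B h"
  shows "restrict h (univ C) \<in> homs C B"
proof -
  have "map (restrict h (univ C)) t \<in> rels B R" if t: "t \<in> rels C R" for R t
  proof -
    have eq: "map (restrict h (univ C)) t = map h t"
      using assms(1)[OF t] by (auto intro: map_cong)
    show ?thesis
      unfolding eq using assms(2) t unfolding is_hom_def by blast
  qed
  then show ?thesis
    using assms(2) unfolding homs_def is_hom_def by (auto simp: PiE_iff)
qed

theorem theorem3p8:
  fixes ar :: "'r \<Rightarrow> nat" and k :: nat and g :: guard
    and A :: "('r, 'a) struc" and B :: "('r, 'b) struc"
  assumes "k > 0" and "wf_struc ar A" and "wf_struc ar B"
  shows "bij_betw (hom_to_strategy k g A) (homs (Gk k g A) B) (win_strategies k g A B)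
         \<and> (guarded_sim k g A B \<longleftrightarrow> (\<exists>h. is_hom (Gk k g A) B h))"
proof
  show "bij_betw (hom_to_strategy k g A) (homs (Gk k g A) B) (win_strategies k g A B)"
    by (rule bij_betw_hom_to_strategy)
  then have "guarded_sim k g A B \<longleftrightarrow> homs (Gk k g A) B \<noteq> {}"
    unfolding guarded_sim_def bij_betw_def by auto
  moreover have "restrict h (univ (Gk k g A)) \<in> homs (Gk k g A) B" if "is_hom (Gk k g A) B h" for h
    by (rule restrict_in_homs[OF _ that]) (rule rels_Gk_subset_univ)
  ultimately show "guarded_sim k g A B \<longleftrightarrow> (\<exists>h. is_hom (Gk k g A) B h)"
    unfolding homs_def by blast
qed

end
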